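(* Let $A$ be a finitely generated associative $\mathbb{C}$-algebra. The product $a\star b:=\frac12(ab+ba)$ is associative on $A_\star:=(A/M_3(A),\star)$, and for every $k\ge1$ the action $a\star n:=\frac12(an+na)$, for $a\in A_\star$, $n\in N_k(A)$, is well-defined and makes $N_k(A)$ into an $A_\star$-module.
   Context: For an associative algebra $A$: $L_1=A$, $L_k=[A,L_{k-1}]$, $M_k=AL_kA$ (two-sided ideal generated by $L_k$), $N_k=M_k/M_{k+1}$. *)

theory Defs
  imports Complex_Main
begin

definition complex_algebra :: "(complex \<Rightarrow> 'a::ring_1 \<Rightarrow> 'a) \<Rightarrow> bool" where
  "complex_algebra scale \<longleftrightarrow> vector_space scale \<and>
     (\<forall>c x y. scale c (x * y) = scale c x * y \<and> scale c (x * y) = x * scale c y)"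

inductive_set gen_subalg :: "(complex \<Rightarrow> 'a::ring_1 \<Rightarrow> 'a) \<Rightarrow> 'a set \<Rightarrow> 'a set"
  for scale :: "complex \<Rightarrow> 'a \<Rightarrow> 'a" and S :: "'a set" where
  gen: "x \<in> S \<Longrightarrow> x \<in> gen_subalg scale S"
| one: "1 \<in> gen_subalg scale S"
| add: "x \<in> gen_subalg scale S \<Longrightarrow> y \<in> gen_subalg scale S \<Longrightarrow> x + y \<in> gen_subalg scale S"
| smul: "x \<in> gen_subalg scale S \<Longrightarrow> scale c x \<in> gen_subalg scale S"
| mult: "x \<in> gen_subalg scale S \<Longrightarrow> y \<in> gen_subalg scale S \<Longrightarrow> x * y \<in> gen_subalg scale S"

definition fin_gen_algebra :: "(complex \<Rightarrow> 'a::ring_1 \<Rightarrow> 'a) \<Rightarrow> bool" where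
  "fin_gen_algebra scale \<longleftrightarrow> (\<exists>S. finite S \<and> gen_subalg scale S = UNIV)"

text \<open>Lower central series: L 1 = A, L (k+1) = [A, L k] (complex linear span of commutators).
  The value at 0 is a junk value (set to UNIV).\<close>
fun LCS :: "(complex \<Rightarrow> 'a::ring_1 \<Rightarrow> 'a) \<Rightarrow> nat \<Rightarrow> 'a set" where
  "LCS scale 0 = UNIV"
| "LCS scale (Suc 0) = UNIV"
| "LCS scale (Suc (Suc n)) =
     module.span scale {a * l - l * a | a l. l \<in> LCS scale (Suc n)}"

text \<open>M k = A L_k A, the two-sided ideal generated by L_k (A is unital).\<close>
definition Mid :: "(complex \<Rightarrow> 'a::ring_1 \<Rightarrow> 'a) \<Rightarrow> nat \<Rightarrow> 'a set" where
  "Mid scale k = module.span scale {a * l * b | a l b. l \<in> LCS scale k}"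

definition jstar :: "(complex \<Rightarrow> 'a::ring_1 \<Rightarrow> 'a) \<Rightarrow> 'a \<Rightarrow> 'a \<Rightarrow> 'a" where
  "jstar scale a b = scale (1/2) (a * b + b * a)"

end

theory Submission
  imports Defs
begin

text \<open>Everything reduces to the commutator calculus of the lower central series.
  Expanding the star products gives
  \<open>(a \<star> b) \<star> c - a \<star> (b \<star> c) = [b, [a, c]] / 4\<close>, which lies in \<open>L\<^sub>3 \<subseteq> M\<^sub>3\<close>;
  for \<open>c \<in> M\<^sub>k\<close> one shows \<open>[b, [a, c]] \<in> M\<^sub>k\<^sub>+\<^sub>1\<close>.
  Well-definedness of the action needs \<open>M\<^sub>3 M\<^sub>k + M\<^sub>k M\<^sub>3 \<subseteq> M\<^sub>k\<^sub>+\<^sub>1\<close>, which comes down to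
  \<open>L\<^sub>3 L\<^sub>k \<subseteq> M\<^sub>k\<^sub>+\<^sub>1\<close>; on generators \<open>[d, b] [c, z]\<close> with \<open>b \<in> L\<^sub>2\<close> this follows from the
  Jacobi identity \<open>[L\<^sub>k, L\<^sub>2] \<subseteq> L\<^sub>k\<^sub>+\<^sub>2\<close>.\<close>

definition commutator :: "'a::ring \<Rightarrow> 'a \<Rightarrow> 'a" where
  "commutator x y = x * y - y * x"

lemma commutator_swap: "commutator y x = - commutator x y"
  unfolding commutator_def by simp

locale complex_alg =
  fixes scale :: "complex \<Rightarrow> 'a::ring_1 \<Rightarrow> 'a"
  assumes complex_algebra: "complex_algebra scale"
begin

sublocale vector_space scale
  using complex_algebra unfolding complex_algebra_def by auto

lemma scale_mult_left: "scale c x * y = scale c (x * y)"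
  using complex_algebra unfolding complex_algebra_def by metis

lemma scale_mult_right: "x * scale c y = scale c (x * y)"
  using complex_algebra unfolding complex_algebra_def by metis

lemmas bilinear_simps = algebra_simps scale_mult_left scale_mult_right commutator_def

lemma span_map_in_subspace:
  assumes "x \<in> span S" "subspace V" "\<And>s. s \<in> S \<Longrightarrow> g s \<in> V"
    "\<And>a b. g (a + b) = g a + g b" "\<And>c a. g (scale c a) = scale c (g a)"
  shows "g x \<in> V"
proof -
  have "g 0 = 0" using assms(4)[of 0 0] by simp
  then have "subspace {x. g x \<in> V}"
    using assms(2,4,5) unfolding subspace_def by auto
  then show ?thesis using span_induct[OF assms(1), of "\<lambda>x. g x \<in> V"] assms(3) by auto
qed

lemma subspace_LCS: "subspace (LCS scale k)"
proof (cases k)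
  case (Suc n)
  then show ?thesis by (cases n) simp_all
qed simp

lemma subspace_Mid: "subspace (Mid scale k)"
  unfolding Mid_def by simp

lemma Mid_add: "x \<in> Mid scale k \<Longrightarrow> y \<in> Mid scale k \<Longrightarrow> x + y \<in> Mid scale k"
  using subspace_Mid subspace_add by blast

lemma Mid_diff: "x \<in> Mid scale k \<Longrightarrow> y \<in> Mid scale k \<Longrightarrow> x - y \<in> Mid scale k"
  using subspace_Mid subspace_diff by blast

lemma Mid_scale: "x \<in> Mid scale k \<Longrightarrow> scale c x \<in> Mid scale k"
  using subspace_Mid subspace_scale by blast

lemma LCS_uminus: "x \<in> LCS scale k \<Longrightarrow> - x \<in> LCS scale k"
  using subspace_LCS subspace_neg by blast

lemma LCS_add: "x \<in> LCS scale k \<Longrightarrow> y \<in> LCS scale k \<Longrightarrow> x + y \<in> LCS scale k"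
  using subspace_LCS subspace_add by blast

lemma Mid_mult_left: "m \<in> Mid scale k \<Longrightarrow> x * m \<in> Mid scale k"
  unfolding Mid_def
proof (rule span_map_in_subspace[where g = "\<lambda>m. x * m"])
  fix s assume "s \<in> {a * l * b | a l b. l \<in> LCS scale k}"
  then obtain a l b where "s = a * l * b" "l \<in> LCS scale k" by blast
  moreover have "x * (a * l * b) = (x * a) * l * b" by (simp only: mult.assoc)
  ultimately show "x * s \<in> span {a * l * b | a l b. l \<in> LCS scale k}"
    by (auto intro!: span_base)
qed (simp_all add: scale_mult_right distrib_left)

lemma Mid_mult_right: "m \<in> Mid scale k \<Longrightarrow> m * x \<in> Mid scale k"
  unfolding Mid_def
proof (rule span_map_in_subspace[where g = "\<lambda>m. m * x"])
  fix s assume "s \<in> {a * l * b | a l b. l \<in> LCS scale k}"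
  then obtain a l b where "s = a * l * b" "l \<in> LCS scale k" by blast
  moreover have "a * l * b * x = a * l * (b * x)" by (simp only: mult.assoc)
  ultimately show "s * x \<in> span {a * l * b | a l b. l \<in> LCS scale k}"
    by (auto intro!: span_base)
qed (simp_all add: scale_mult_left distrib_right)

lemma commutator_Mid: "n \<in> Mid scale k \<Longrightarrow> commutator a n \<in> Mid scale k"
  unfolding commutator_def by (intro Mid_diff Mid_mult_left Mid_mult_right)

lemma LCS_subset_Mid: "l \<in> LCS scale k \<Longrightarrow> l \<in> Mid scale k"
proof -
  assume "l \<in> LCS scale k"
  then have "1 * l * 1 \<in> Mid scale k" unfolding Mid_def by (blast intro: span_base)
  then show ?thesis by simp
qed

lemma commutator_LCS: "l \<in> LCS scale k \<Longrightarrow> commutator a l \<in> LCS scale (Suc k)"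
proof (cases k)
  case (Suc n)
  assume "l \<in> LCS scale k"
  then have "commutator a l \<in> span {a * l - l * a | a l. l \<in> LCS scale (Suc n)}"
    unfolding commutator_def Suc by (blast intro: span_base)
  then show ?thesis unfolding Suc by simp
qed simp

lemma commutator_LCS_Mid: "l \<in> LCS scale k \<Longrightarrow> commutator a l \<in> Mid scale (Suc k)"
  by (intro LCS_subset_Mid commutator_LCS)

lemma LCS_Suc_subset_Mid:
  assumes "1 \<le> k" "l \<in> LCS scale (Suc k)"
  shows "l \<in> Mid scale k"
proof -
  obtain k' where k: "k = Suc k'" using assms(1) by (cases k) auto
  have "l \<in> span {a * l - l * a | a l. l \<in> LCS scale k}"
    using assms(2) unfolding k by simp
  then show ?thesis
  proof (rule span_subspace_induct[OF _ subspace_Mid])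
    fix x assume "x \<in> {a * l - l * a | a l. l \<in> LCS scale k}"
    then obtain a l where "x = commutator a l" "l \<in> LCS scale k"
      unfolding commutator_def by blast
    then show "x \<in> Mid scale k" using commutator_Mid LCS_subset_Mid by blast
  qed
qed

lemma commutator_LCS_LCS2:
  assumes z: "z \<in> LCS scale k" and b: "b \<in> LCS scale 2"
  shows "commutator z b \<in> LCS scale (Suc (Suc k))"
proof -
  have "b \<in> span {a * l - l * a | a l. l \<in> LCS scale 1}"
    using b by (simp add: numeral_2_eq_2)
  then show ?thesis
  proof (rule span_map_in_subspace[where g = "commutator z", OF _ subspace_LCS])
    fix s assume "s \<in> {a * l - l * a | a l. l \<in> LCS scale 1}"
    then obtain u v where s: "s = commutator u v" unfolding commutator_def by blast
    have "commutator z s = commutator u (commutator z v) - commutator v (commutator z u)"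
      unfolding s commutator_def by (simp add: algebra_simps)
    moreover have "commutator z u \<in> LCS scale (Suc k)" "commutator z v \<in> LCS scale (Suc k)"
      using commutator_LCS[OF z] commutator_swap LCS_uminus by metis+
    ultimately show "commutator z s \<in> LCS scale (Suc (Suc k))"
      using commutator_LCS LCS_add LCS_uminus by (metis diff_conv_add_uminus)
  qed (simp_all add: bilinear_simps)
qed

lemma span_mult_span_in_subspace:
  assumes "x \<in> span S" "y \<in> span T" "subspace V" "\<And>s t. s \<in> S \<Longrightarrow> t \<in> T \<Longrightarrow> s * t \<in> V"
  shows "x * y \<in> V"
  using assms(1)
proof (rule span_map_in_subspace[where g = "\<lambda>x. x * y", OF _ assms(3)])
  fix s assume "s \<in> S"
  show "s * y \<in> V"
    by (rule span_map_in_subspace[where g = "\<lambda>y. s * y", OF assms(2,3)])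
      (simp_all add: \<open>s \<in> S\<close> assms(4) bilinear_simps)
qed (simp_all add: bilinear_simps)

lemma commutator_LCS2_mult_commutator:
  assumes b: "b \<in> LCS scale 2" and z: "z \<in> LCS scale k"
  shows "commutator d b * commutator c z \<in> Mid scale (Suc (Suc k))"
proof -
  have "commutator d b * commutator c z =
      b * commutator d (commutator z c) - commutator d (commutator z (b * c))
      + d * commutator z b * c - commutator z b * d * c - commutator z b * commutator c d"
    unfolding commutator_def by (simp add: algebra_simps)
  moreover have "commutator d (commutator z x) \<in> Mid scale (Suc (Suc k))" for x
    using commutator_LCS_Mid[OF LCS_uminus[OF commutator_LCS[OF z]]] commutator_swap by metis
  moreover have "commutator z b \<in> Mid scale (Suc (Suc k))"
    using LCS_subset_Mid[OF commutator_LCS_LCS2[OF z b]] .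
  ultimately show ?thesis
    by (simp add: Mid_add Mid_diff Mid_mult_left Mid_mult_right)
qed

lemma LCS3_mult_LCS:
  assumes k: "1 \<le> k" and t: "t \<in> LCS scale 3" and l: "l \<in> LCS scale k"
  shows "t * l \<in> Mid scale (Suc k)"
proof (cases "k = 1")
  case True
  have "t \<in> LCS scale (Suc 2)" using t by (simp only: numeral_3_eq_3 numeral_2_eq_2)
  then have "t \<in> Mid scale 2" by (rule LCS_Suc_subset_Mid[rotated]) simp
  then show ?thesis using True Mid_mult_right by (simp add: numeral_2_eq_2)
next
  case False
  then obtain k' where k': "k = Suc (Suc k')" using k by (cases k; cases "k - 1") auto
  have "t \<in> span {d * b - b * d | d b. b \<in> LCS scale 2}"
    using t by (simp add: numeral_3_eq_3 numeral_2_eq_2)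
  moreover have "l \<in> span {c * z - z * c | c z. z \<in> LCS scale (Suc k')}"
    using l unfolding k' by simp
  ultimately show ?thesis
  proof (rule span_mult_span_in_subspace[OF _ _ subspace_Mid])
    fix s u
    assume "s \<in> {d * b - b * d | d b. b \<in> LCS scale 2}"
      and "u \<in> {c * z - z * c | c z. z \<in> LCS scale (Suc k')}"
    then obtain d b c z where "s = commutator d b" "u = commutator c z"
      and "b \<in> LCS scale 2" "z \<in> LCS scale (Suc k')"
      unfolding commutator_def by blast
    then show "s * u \<in> Mid scale (Suc k)"
      using commutator_LCS2_mult_commutator k' by simp
  qed
qed

lemma LCS_mult_LCS3:
  assumes "1 \<le> k" "t \<in> LCS scale 3" "l \<in> LCS scale k"
  shows "l * t \<in> Mid scale (Suc k)"
proof -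
  have "l * t = t * l - commutator t l" unfolding commutator_def by simp
  then show ?thesis
    using LCS3_mult_LCS[OF assms] commutator_LCS_Mid[OF assms(3)] Mid_diff by simp
qed

lemma Mid3_mult_LCS:
  assumes k: "1 \<le> k" and m: "m \<in> Mid scale 3" and l: "l \<in> LCS scale k"
  shows "m * l \<in> Mid scale (Suc k)"
  using m[unfolded Mid_def]
proof (rule span_map_in_subspace[where g = "\<lambda>m. m * l", OF _ subspace_Mid])
  fix s assume "s \<in> {x * t * y | x t y. t \<in> LCS scale 3}"
  then obtain x t y where s: "s = x * t * y" and t: "t \<in> LCS scale 3" by blast
  have "s * l = x * (t * l) * y + x * t * commutator y l"
    unfolding s commutator_def by (simp add: algebra_simps)
  then show "s * l \<in> Mid scale (Suc k)"
    using LCS3_mult_LCS[OF k t l] commutator_LCS_Mid[OF l]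
    by (simp add: Mid_add Mid_mult_left Mid_mult_right)
qed (simp_all add: bilinear_simps)

lemma LCS_mult_Mid3:
  assumes k: "1 \<le> k" and m: "m \<in> Mid scale 3" and l: "l \<in> LCS scale k"
  shows "l * m \<in> Mid scale (Suc k)"
  using m[unfolded Mid_def]
proof (rule span_map_in_subspace[where g = "\<lambda>m. l * m", OF _ subspace_Mid])
  fix s assume "s \<in> {x * t * y | x t y. t \<in> LCS scale 3}"
  then obtain x t y where s: "s = x * t * y" and t: "t \<in> LCS scale 3" by blast
  have "l * s = x * (l * t) * y - commutator x l * t * y"
    unfolding s commutator_def by (simp add: algebra_simps)
  then show "l * s \<in> Mid scale (Suc k)"
    using LCS_mult_LCS3[OF k t l] commutator_LCS_Mid[OF l]
    by (simp add: Mid_diff Mid_mult_left Mid_mult_right)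
qed (simp_all add: bilinear_simps)

lemma Mid3_mult_Mid:
  assumes k: "1 \<le> k" and m: "m \<in> Mid scale 3" and n: "n \<in> Mid scale k"
  shows "m * n \<in> Mid scale (Suc k)"
  using n[unfolded Mid_def]
proof (rule span_map_in_subspace[where g = "\<lambda>n. m * n", OF _ subspace_Mid])
  fix s assume "s \<in> {x * l * y | x l y. l \<in> LCS scale k}"
  then obtain x l y where "s = x * l * y" and l: "l \<in> LCS scale k" by blast
  then have "m * s = (m * x) * l * y" by (simp add: mult.assoc)
  then show "m * s \<in> Mid scale (Suc k)"
    using Mid3_mult_LCS[OF k Mid_mult_right[OF m] l] Mid_mult_right by simp
qed (simp_all add: bilinear_simps)

lemma Mid_mult_Mid3:
  assumes k: "1 \<le> k" and m: "m \<in> Mid scale 3" and n: "n \<in> Mid scale k"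
  shows "n * m \<in> Mid scale (Suc k)"
  using n[unfolded Mid_def]
proof (rule span_map_in_subspace[where g = "\<lambda>n. n * m", OF _ subspace_Mid])
  fix s assume "s \<in> {x * l * y | x l y. l \<in> LCS scale k}"
  then obtain x l y where "s = x * l * y" and l: "l \<in> LCS scale k" by blast
  then have "s * m = x * (l * (y * m))" by (simp add: mult.assoc)
  then show "s * m \<in> Mid scale (Suc k)"
    using LCS_mult_Mid3[OF k Mid_mult_left[OF m] l] Mid_mult_left by simp
qed (simp_all add: bilinear_simps)

lemma commutator_generator_mod_Mid_Suc:
  assumes l: "l \<in> LCS scale k"
  shows "commutator a (x * l * y) - commutator a (x * y) * l \<in> Mid scale (Suc k)"
proof -
  have "commutator a (x * l * y) - commutator a (x * y) * l
      = x * commutator a l * y - commutator a x * commutator y l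
        - x * commutator (commutator a y) l"
    unfolding commutator_def by (simp add: algebra_simps)
  then show ?thesis
    using commutator_LCS_Mid[OF l] by (simp add: Mid_diff Mid_mult_left Mid_mult_right)
qed

text \<open>Modulo \<open>M\<^sub>k\<^sub>+\<^sub>1\<close>, \<open>[a, x l y] \<equiv> [a, x y] l\<close> with \<open>[a, x y] \<in> L\<^sub>2\<close>, and bracketing
  once more produces \<open>[b, [a, x y]] l \<in> L\<^sub>3 L\<^sub>k\<close>.\<close>
lemma commutator_commutator_Mid:
  assumes k: "1 \<le> k" and n: "n \<in> Mid scale k"
  shows "commutator b (commutator a n) \<in> Mid scale (Suc k)"
  using n[unfolded Mid_def]
proof (rule span_map_in_subspace[where g = "\<lambda>n. commutator b (commutator a n)",
      OF _ subspace_Mid])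
  fix s assume "s \<in> {x * l * y | x l y. l \<in> LCS scale k}"
  then obtain x l y where s: "s = x * l * y" and l: "l \<in> LCS scale k" by blast
  define w where "w = commutator a (x * y)"
  have "commutator b (commutator a s)
      = commutator b (commutator a s - w * l) + commutator b w * l + w * commutator b l"
    unfolding commutator_def by (simp add: algebra_simps)
  moreover have "commutator b (commutator a s - w * l) \<in> Mid scale (Suc k)"
    unfolding s w_def by (intro commutator_Mid commutator_generator_mod_Mid_Suc l)
  moreover have "commutator b w \<in> LCS scale 3"
    unfolding numeral_3_eq_3 w_def by (intro commutator_LCS) simp
  ultimately show "commutator b (commutator a s) \<in> Mid scale (Suc k)"
    using LCS3_mult_LCS[OF k _ l] commutator_LCS_Mid[OF l] by (simp add: Mid_add Mid_mult_left)
qed (simp_all add: bilinear_simps)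

lemma jstar_diff:
  "jstar scale a b - jstar scale a' b' = scale (1/2) ((a * b + b * a) - (a' * b' + b' * a'))"
  unfolding jstar_def by (simp add: scale_right_diff_distrib)

lemma jstar_assoc_diff:
  "jstar scale (jstar scale a b) c - jstar scale a (jstar scale b c)
    = scale (1/4) (commutator b (commutator a c))"
proof -
  have "jstar scale (jstar scale a b) c = scale (1/4) ((a*b + b*a) * c + c * (a*b + b*a))"
    "jstar scale a (jstar scale b c) = scale (1/4) (a * (b*c + c*b) + (b*c + c*b) * a)"
    unfolding jstar_def by (simp_all add: scale_mult_left scale_mult_right
        scale_right_distrib[symmetric])
  moreover have "(a*b + b*a) * c + c * (a*b + b*a) - (a * (b*c + c*b) + (b*c + c*b) * a)
      = commutator b (commutator a c)"
    unfolding commutator_def by (simp add: algebra_simps)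
  ultimately show ?thesis by (simp add: scale_right_diff_distrib[symmetric])
qed

lemma jstar_one_left: "jstar scale 1 n = n"
proof -
  have "scale (1/2) (n + n) = scale (1/2 + 1/2) n"
    by (simp only: scale_left_distrib scale_right_distrib)
  then show ?thesis unfolding jstar_def by simp
qed

lemma jstar_add_left: "jstar scale (a + b) n = jstar scale a n + jstar scale b n"
  unfolding jstar_def by (simp add: algebra_simps)

lemma jstar_add_right: "jstar scale a (n + m) = jstar scale a n + jstar scale a m"
  unfolding jstar_def by (simp add: algebra_simps)

lemma jstar_scale_left: "jstar scale (scale c a) n = scale c (jstar scale a n)"
  unfolding jstar_def
  by (simp add: scale_mult_left scale_mult_right scale_right_distrib[symmetric] mult.commute)

lemma jstar_scale_right: "jstar scale a (scale c n) = scale c (jstar scale a n)"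
  unfolding jstar_def
  by (simp add: scale_mult_left scale_mult_right scale_right_distrib[symmetric] mult.commute)

lemma jstar_Mid: "n \<in> Mid scale k \<Longrightarrow> jstar scale a n \<in> Mid scale k"
  unfolding jstar_def by (intro Mid_scale Mid_add Mid_mult_left Mid_mult_right)

lemma jstar_cong_Mid:
  assumes "a - a' \<in> Mid scale k" "b - b' \<in> Mid scale k"
  shows "jstar scale a b - jstar scale a' b' \<in> Mid scale k"
proof -
  have "(a * b + b * a) - (a' * b' + b' * a')
      = (a - a') * b + a' * (b - b') + (b - b') * a + b' * (a - a')"
    by (simp add: algebra_simps)
  then show ?thesis
    unfolding jstar_diff using assms by (simp add: Mid_scale Mid_add Mid_mult_left Mid_mult_right)
qed

lemma jstar_cong_Mid3_Mid_Suc: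
  assumes k: "1 \<le> k" and a: "a - a' \<in> Mid scale 3" and n: "n \<in> Mid scale k"
    and n': "n - n' \<in> Mid scale (Suc k)"
  shows "jstar scale a n - jstar scale a' n' \<in> Mid scale (Suc k)"
proof -
  have "(a * n + n * a) - (a' * n' + n' * a')
      = (a - a') * n + n * (a - a') + a' * (n - n') + (n - n') * a'"
    by (simp add: algebra_simps)
  then show ?thesis
    unfolding jstar_diff using Mid3_mult_Mid[OF k a n] Mid_mult_Mid3[OF k a n] n'
    by (simp add: Mid_scale Mid_add Mid_mult_left Mid_mult_right)
qed

lemma jstar_assoc_Mid3:
  "jstar scale (jstar scale a b) c - jstar scale a (jstar scale b c) \<in> Mid scale 3"
proof -
  have "commutator b (commutator a c) \<in> LCS scale 3"
    unfolding numeral_3_eq_3 by (intro commutator_LCS) simp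
  then show ?thesis unfolding jstar_assoc_diff by (intro Mid_scale LCS_subset_Mid)
qed

lemma jstar_assoc_Mid_Suc:
  "1 \<le> k \<Longrightarrow> n \<in> Mid scale k \<Longrightarrow>
    jstar scale (jstar scale a b) n - jstar scale a (jstar scale b n) \<in> Mid scale (Suc k)"
  unfolding jstar_assoc_diff by (intro Mid_scale commutator_commutator_Mid)

end

theorem proposition2p6:
  fixes scale :: "complex \<Rightarrow> 'a::ring_1 \<Rightarrow> 'a"
  assumes "complex_algebra scale"
      and "fin_gen_algebra scale"
  shows
    \<comment> \<open>the star product is well defined on A/M_3 and associative there\<close>
    "(\<forall>a a' b b'. a - a' \<in> Mid scale 3 \<longrightarrow> b - b' \<in> Mid scale 3 \<longrightarrow>
        jstar scale a b - jstar scale a' b' \<in> Mid scale 3)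
   \<and> (\<forall>a b c. jstar scale (jstar scale a b) c - jstar scale a (jstar scale b c) \<in> Mid scale 3)
   \<and> (\<forall>k\<ge>1.
        \<comment> \<open>the action maps M_k into M_k\<close>
        (\<forall>a n. n \<in> Mid scale k \<longrightarrow> jstar scale a n \<in> Mid scale k)
        \<comment> \<open>well defined on A/M_3 times M_k/M_(k+1)\<close>
      \<and> (\<forall>a a' n n'. a - a' \<in> Mid scale 3 \<longrightarrow> n \<in> Mid scale k \<longrightarrow> n' \<in> Mid scale k \<longrightarrow>
            n - n' \<in> Mid scale (k + 1) \<longrightarrow>
            jstar scale a n - jstar scale a' n' \<in> Mid scale (k + 1))
        \<comment> \<open>module axioms modulo M_(k+1)\<close>
      \<and> (\<forall>a b n. n \<in> Mid scale k \<longrightarrow>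
            jstar scale (jstar scale a b) n - jstar scale a (jstar scale b n) \<in> Mid scale (k + 1))
      \<and> (\<forall>n. n \<in> Mid scale k \<longrightarrow> jstar scale 1 n = n)
      \<and> (\<forall>a b n. n \<in> Mid scale k \<longrightarrow> jstar scale (a + b) n = jstar scale a n + jstar scale b n)
      \<and> (\<forall>a n m. n \<in> Mid scale k \<longrightarrow> m \<in> Mid scale k \<longrightarrow>
            jstar scale a (n + m) = jstar scale a n + jstar scale a m)
      \<and> (\<forall>c a n. n \<in> Mid scale k \<longrightarrow>
            jstar scale (scale c a) n = scale c (jstar scale a n)
          \<and> jstar scale a (scale c n) = scale c (jstar scale a n)))"
proof -
  interpret complex_alg scale by (rule complex_alg.intro) (fact assms(1))
  show ?thesis
    by (simp add: jstar_cong_Mid jstar_assoc_Mid3 jstar_Mid jstar_cong_Mid3_Mid_Suc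
        jstar_assoc_Mid_Suc jstar_one_left jstar_add_left jstar_add_right
        jstar_scale_left jstar_scale_right)
qed

end
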